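(* If a game has a player $n$-transitive and strategy trivial symmetry group, then it is strictly isomorphic to a VNM symmetric game (i.e. there exist a VNM symmetric game $\Gamma'$ and a strict game isomorphism from the given game to $\Gamma'$).
   Context: A (finite normal-form) game $\Gamma=(N,A,u)$ consists of a finite set $N=\{1,\dots,n\}$ of $n\ge2$ players, a finite non-empty strategy set $A_i$ for each $i\in N$ (all of the same cardinality), $A=\times_{i\in N}A_i$, and utility functions $u_i:A\to\mathbb{R}$. A game bijection $g=(\pi;(\tau_i)_{i\in N})$ from $\Gamma_1=(N,A,u)$ to $\Gamma_2=(M,B,v)$ consists of a bijection $\pi:N\to M$ and bijections $\tau_i:A_i\to B_{\pi(i)}$; $g.i=\pi(i)$, $g.s_i=\tau_i(s_i)$, $g.s$ is the profile with $(g.s)_{\pi(i)}=\tau_i(s_i)$. It is a strict game isomorphism if $u_i(s)=v_{g.i}(g.s)$ for all $i,s$; an automorphism of $\Gamma$ is a strict game isomorphism from $\Gamma$ to itself. A symmetry group is a subgroup $G$ of the automorphism group; $G_i=\{g\in G:g.i=i\}$. $G$ is player $n$-transitive if for every $\pi\in S_N$ there is $g\in G$ with $g.i=\pi(i)$ for all $i$; strategy trivial if for every $i$ and every $g\in G_i$, $g.s_i=s_i$ for all $s_i\in A_i$. $\Gamma$ is VNM symmetric if $A_i=A_j$ for all $i,j$ and, for each $\pi\in S_N$, $u_{\pi(i)}(s_1,\dots,s_n)=u_i(s_{\pi(1)},\dots,s_{\pi(n)})$ for all $i\in N$, $(s_1,\dots,s_n)\in A$. *)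

theory Defs
  imports Complex_Main "HOL-Library.FuncSet"
begin

text \<open>Players are 0,...,n-1 (the paper's 1,...,n). A game is given by the number n
of players, strategy sets A i, and utilities u i defined on profiles
(extensional functions on the player set).\<close>

definition profiles :: "nat \<Rightarrow> (nat \<Rightarrow> 's set) \<Rightarrow> (nat \<Rightarrow> 's) set" where
  "profiles n A = PiE {..<n} A"

definition game :: "nat \<Rightarrow> (nat \<Rightarrow> 's set) \<Rightarrow> (nat \<Rightarrow> (nat \<Rightarrow> 's) \<Rightarrow> real) \<Rightarrow> bool" where
  "game n A u \<longleftrightarrow> n \<ge> 2 \<and> (\<forall>i<n. finite (A i) \<and> A i \<noteq> {})
     \<and> (\<forall>i<n. \<forall>j<n. card (A i) = card (A j))"

type_synonym ('s,'t) gbij = "(nat \<Rightarrow> nat) \<times> (nat \<Rightarrow> 's \<Rightarrow> 't)"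

definition game_bijection ::
  "nat \<Rightarrow> (nat \<Rightarrow> 's set) \<Rightarrow> nat \<Rightarrow> (nat \<Rightarrow> 't set) \<Rightarrow> ('s,'t) gbij \<Rightarrow> bool" where
  "game_bijection n A m B g \<longleftrightarrow> bij_betw (fst g) {..<n} {..<m}
     \<and> (\<forall>i<n. bij_betw (snd g i) (A i) (B (fst g i)))"

text \<open>Action on profiles: (g.s)_{pi i} = tau_i (s_i).\<close>

definition gb_apply :: "nat \<Rightarrow> nat \<Rightarrow> ('s,'t) gbij \<Rightarrow> (nat \<Rightarrow> 's) \<Rightarrow> (nat \<Rightarrow> 't)" where
  "gb_apply n m g s = (\<lambda>j\<in>{..<m}. (let i = the_inv_into {..<n} (fst g) j in snd g i (s i)))"

definition strict_iso ::
  "nat \<Rightarrow> (nat \<Rightarrow> 's set) \<Rightarrow> (nat \<Rightarrow> (nat \<Rightarrow> 's) \<Rightarrow> real) \<Rightarrow>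
   nat \<Rightarrow> (nat \<Rightarrow> 't set) \<Rightarrow> (nat \<Rightarrow> (nat \<Rightarrow> 't) \<Rightarrow> real) \<Rightarrow> ('s,'t) gbij \<Rightarrow> bool" where
  "strict_iso n A u m B v g \<longleftrightarrow> game_bijection n A m B g
     \<and> (\<forall>i<n. \<forall>s\<in>profiles n A. u i s = v (fst g i) (gb_apply n m g s))"

text \<open>Canonical (extensional) representatives of game bijections of a game to itself,
so that equality of group elements is equality of the underlying maps.\<close>

definition gb_extensional :: "nat \<Rightarrow> (nat \<Rightarrow> 's set) \<Rightarrow> ('s,'s) gbij \<Rightarrow> bool" where
  "gb_extensional n A g \<longleftrightarrow> fst g \<in> extensional {..<n} \<and> snd g \<in> extensional {..<n}
     \<and> (\<forall>i<n. snd g i \<in> extensional (A i))"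

definition automorphisms ::
  "nat \<Rightarrow> (nat \<Rightarrow> 's set) \<Rightarrow> (nat \<Rightarrow> (nat \<Rightarrow> 's) \<Rightarrow> real) \<Rightarrow> ('s,'s) gbij set" where
  "automorphisms n A u = {g. strict_iso n A u n A u g \<and> gb_extensional n A g}"

definition gb_id :: "nat \<Rightarrow> (nat \<Rightarrow> 's set) \<Rightarrow> ('s,'s) gbij" where
  "gb_id n A = ((\<lambda>i\<in>{..<n}. i), (\<lambda>i\<in>{..<n}. \<lambda>x\<in>A i. x))"

definition gb_comp :: "nat \<Rightarrow> (nat \<Rightarrow> 's set) \<Rightarrow> ('s,'s) gbij \<Rightarrow> ('s,'s) gbij \<Rightarrow> ('s,'s) gbij" where
  "gb_comp n A g h = ((\<lambda>i\<in>{..<n}. fst g (fst h i)),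
                      (\<lambda>i\<in>{..<n}. \<lambda>x\<in>A i. snd g (fst h i) (snd h i x)))"

definition gb_inv :: "nat \<Rightarrow> (nat \<Rightarrow> 's set) \<Rightarrow> ('s,'s) gbij \<Rightarrow> ('s,'s) gbij" where
  "gb_inv n A g = ((\<lambda>j\<in>{..<n}. the_inv_into {..<n} (fst g) j),
     (\<lambda>j\<in>{..<n}. \<lambda>y\<in>A j.
        the_inv_into (A (the_inv_into {..<n} (fst g) j)) (snd g (the_inv_into {..<n} (fst g) j)) y))"

definition symmetry_group ::
  "nat \<Rightarrow> (nat \<Rightarrow> 's set) \<Rightarrow> (nat \<Rightarrow> (nat \<Rightarrow> 's) \<Rightarrow> real) \<Rightarrow> ('s,'s) gbij set \<Rightarrow> bool" where
  "symmetry_group n A u G \<longleftrightarrow> G \<subseteq> automorphisms n A u \<and> gb_id n A \<in> G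
     \<and> (\<forall>g\<in>G. \<forall>h\<in>G. gb_comp n A g h \<in> G) \<and> (\<forall>g\<in>G. gb_inv n A g \<in> G)"

definition player_n_transitive :: "nat \<Rightarrow> ('s,'s) gbij set \<Rightarrow> bool" where
  "player_n_transitive n G \<longleftrightarrow>
     (\<forall>p. bij_betw p {..<n} {..<n} \<longrightarrow> (\<exists>g\<in>G. \<forall>i<n. fst g i = p i))"

definition strategy_trivial :: "nat \<Rightarrow> (nat \<Rightarrow> 's set) \<Rightarrow> ('s,'s) gbij set \<Rightarrow> bool" where
  "strategy_trivial n A G \<longleftrightarrow>
     (\<forall>i<n. \<forall>g\<in>G. fst g i = i \<longrightarrow> (\<forall>x\<in>A i. snd g i x = x))"

definition vnm_symmetric :: "nat \<Rightarrow> (nat \<Rightarrow> 't set) \<Rightarrow> (nat \<Rightarrow> (nat \<Rightarrow> 't) \<Rightarrow> real) \<Rightarrow> bool" where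
  "vnm_symmetric n B v \<longleftrightarrow> game n B v \<and> (\<forall>i<n. \<forall>j<n. B i = B j)
     \<and> (\<forall>p. bij_betw p {..<n} {..<n} \<longrightarrow>
          (\<forall>i<n. \<forall>s\<in>profiles n B. v (p i) s = v i (\<lambda>j\<in>{..<n}. s (p j))))"

end

theory Submission
  imports Defs "HOL-Combinatorics.Transposition"
begin

text \<open>Fix a reference player 0. For every player i pick a symmetry moving 0 to i and let
\<open>\<sigma> i : A 0 \<rightarrow> A i\<close> be its strategy map at 0. Strategy triviality says that the strategy
map of a symmetry at a player depends only on where that player is sent, so the labellings
\<open>\<sigma> i\<close> are equivariant: the strategy map of any symmetry h at i sends \<open>\<sigma> i x\<close> to
\<open>\<sigma> (h i) x\<close>. Relabelling every strategy set by \<open>\<sigma>\<close> gives an isomorphic game with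
common strategy set A 0 in which each symmetry acts by permuting players only; as every
permutation of players is realised by a symmetry, the relabelled game is VNM symmetric.\<close>

lemma gb_apply_player:
  assumes "bij_betw (fst g) {..<n} {..<m}" and "k < n"
  shows "gb_apply n m g s (fst g k) = snd g k (s k)"
proof -
  have "fst g k < m" using assms bij_betwE by blast
  moreover have "the_inv_into {..<n} (fst g) (fst g k) = k"
    using assms by (simp add: bij_betw_def the_inv_into_f_f)
  ultimately show ?thesis unfolding gb_apply_def by simp
qed

lemma gb_apply_player_id:
  "gb_apply n n ((\<lambda>i. i), \<tau>) s = (\<lambda>j\<in>{..<n}. \<tau> j (s j))"
proof -
  have "the_inv_into {..<n} (\<lambda>i. i) j = j" if "j < n" for j
    using that by (simp add: the_inv_into_f_eq)
  then show ?thesis unfolding gb_apply_def by (auto simp: fun_eq_iff)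
qed

lemma gb_comp_apply:
  assumes "i < n"
  shows "fst (gb_comp n A g h) i = fst g (fst h i)"
    and "x \<in> A i \<Longrightarrow> snd (gb_comp n A g h) i x = snd g (fst h i) (snd h i x)"
  using assms unfolding gb_comp_def by auto

lemma gb_inv_apply:
  assumes "bij_betw (fst g) {..<n} {..<n}" and "k < n"
  shows "fst (gb_inv n A g) (fst g k) = k"
    and "y \<in> A (fst g k) \<Longrightarrow> snd (gb_inv n A g) (fst g k) y = the_inv_into (A k) (snd g k) y"
proof -
  have "fst g k < n" using assms bij_betwE by blast
  moreover have "the_inv_into {..<n} (fst g) (fst g k) = k"
    using assms by (simp add: bij_betw_def the_inv_into_f_f)
  ultimately show "fst (gb_inv n A g) (fst g k) = k"
    and "y \<in> A (fst g k) \<Longrightarrow> snd (gb_inv n A g) (fst g k) y = the_inv_into (A k) (snd g k) y"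
    unfolding gb_inv_def by simp_all
qed

lemma symmetry_group_memD:
  assumes "symmetry_group n A u G" and "g \<in> G"
  shows symmetry_group_player_bij: "bij_betw (fst g) {..<n} {..<n}"
    and symmetry_group_strategy_bij: "\<And>i. i < n \<Longrightarrow> bij_betw (snd g i) (A i) (A (fst g i))"
    and symmetry_group_utility:
      "\<And>i s. i < n \<Longrightarrow> s \<in> profiles n A \<Longrightarrow> u i s = u (fst g i) (gb_apply n n g s)"
  using assms unfolding symmetry_group_def automorphisms_def strict_iso_def game_bijection_def
  by auto

lemma player_n_transitive_moves:
  assumes "player_n_transitive n G" and "i < n" and "j < n"
  shows "\<exists>g\<in>G. fst g j = i"
proof -
  have "bij_betw (transpose j i) {..<n} {..<n}" using assms by simp
  then obtain g where "g \<in> G" "\<forall>k<n. fst g k = transpose j i k"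
    using assms(1) unfolding player_n_transitive_def by blast
  then show ?thesis using assms(3) by (metis transpose_apply_first)
qed

lemma strategy_trivial_strategy_map_unique:
  assumes G: "symmetry_group n A u G" and triv: "strategy_trivial n A G"
    and g: "g \<in> G" and g': "g' \<in> G" and j: "j < n" and same: "fst g j = fst g' j"
    and x: "x \<in> A j"
  shows "snd g j x = snd g' j x"
proof -
  note g'_bij = symmetry_group_player_bij[OF G g'] symmetry_group_strategy_bij[OF G g' j]
  define d where "d = gb_comp n A (gb_inv n A g') g"
  have "d \<in> G" using G g g' unfolding d_def symmetry_group_def by blast
  have gx: "snd g j x \<in> A (fst g' j)"
    using symmetry_group_strategy_bij[OF G g j] x same bij_betwE by fastforce
  have "fst d j = fst (gb_inv n A g') (fst g' j)"
    by (simp add: d_def gb_comp_apply(1)[OF j] same)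
  also have "\<dots> = j" using gb_inv_apply(1)[OF g'_bij(1) j] .
  finally have "fst d j = j" .
  with \<open>d \<in> G\<close> have "snd d j x = x" using triv j x unfolding strategy_trivial_def by blast
  moreover have "snd d j x = the_inv_into (A j) (snd g' j) (snd g j x)"
    using gb_comp_apply(2)[where A = A, OF j x] gb_inv_apply(2)[where A = A, OF g'_bij(1) j gx] same
    by (simp add: d_def)
  ultimately show ?thesis
    using f_the_inv_into_f_bij_betw[OF g'_bij(2) gx] by simp
qed

lemma equivariant_labelling_exists:
  assumes G: "symmetry_group n A u G" and trans: "player_n_transitive n G"
    and triv: "strategy_trivial n A G" and "0 < n"
  shows "\<exists>\<sigma>. (\<forall>i<n. bij_betw (\<sigma> i) (A 0) (A i))
           \<and> (\<forall>h\<in>G. \<forall>i<n. \<forall>x\<in>A 0. snd h i (\<sigma> i x) = \<sigma> (fst h i) x)"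
proof -
  obtain gg where gg: "\<And>i. i < n \<Longrightarrow> gg i \<in> G \<and> fst (gg i) 0 = i"
    using player_n_transitive_moves[OF trans _ \<open>0 < n\<close>] by metis
  define \<sigma> where "\<sigma> i = snd (gg i) 0" for i
  have "bij_betw (\<sigma> i) (A 0) (A i)" if "i < n" for i
    using symmetry_group_strategy_bij[OF G _ \<open>0 < n\<close>, of "gg i"] gg[OF that]
    unfolding \<sigma>_def by simp
  moreover have "snd h i (\<sigma> i x) = \<sigma> (fst h i) x"
    if h: "h \<in> G" and i: "i < n" and x: "x \<in> A 0" for h i x
  proof -
    define c where "c = gb_comp n A h (gg i)"
    have k: "fst h i < n" using symmetry_group_player_bij[OF G h] i bij_betwE by blast
    have "c \<in> G" using G h gg[OF i] unfolding c_def symmetry_group_def by blast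
    moreover have "fst c 0 = fst (gg (fst h i)) 0"
      using gg[OF i] gg[OF k] by (simp add: c_def gb_comp_apply(1)[OF \<open>0 < n\<close>])
    ultimately have "snd c 0 x = \<sigma> (fst h i) x"
      using strategy_trivial_strategy_map_unique[OF G triv _ _ \<open>0 < n\<close> _ x] gg[OF k]
      unfolding \<sigma>_def by blast
    then show ?thesis
      using gb_comp_apply(2)[where A = A, OF \<open>0 < n\<close> x] gg[OF i] by (simp add: c_def \<sigma>_def)
  qed
  ultimately show ?thesis by blast
qed

definition relabel_utility ::
  "nat \<Rightarrow> (nat \<Rightarrow> 't \<Rightarrow> 's) \<Rightarrow> (nat \<Rightarrow> (nat \<Rightarrow> 's) \<Rightarrow> real) \<Rightarrow> nat \<Rightarrow> (nat \<Rightarrow> 't) \<Rightarrow> real" where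
  "relabel_utility n \<sigma> u j t = u j (\<lambda>k\<in>{..<n}. \<sigma> k (t k))"

lemma strict_iso_relabel:
  assumes \<sigma>: "\<And>i. i < n \<Longrightarrow> bij_betw (\<sigma> i) S (A i)"
  shows "strict_iso n A u n (\<lambda>_. S) (relabel_utility n \<sigma> u) ((\<lambda>i. i), \<lambda>i. the_inv_into S (\<sigma> i))"
  unfolding strict_iso_def game_bijection_def
proof (intro conjI allI impI ballI)
  show "bij_betw (fst ((\<lambda>i. i), \<lambda>i. the_inv_into S (\<sigma> i))) {..<n} {..<n}"
    by (simp add: bij_betw_def)
  show "bij_betw (snd ((\<lambda>i. i), \<lambda>i. the_inv_into S (\<sigma> i)) i) (A i) S" if "i < n" for i
    using bij_betw_the_inv_into[OF \<sigma>[OF that]] by simp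
  fix i s assume s: "s \<in> profiles n A"
  have "(\<lambda>k\<in>{..<n}. \<sigma> k (the_inv_into S (\<sigma> k) (s k))) = s"
  proof
    fix k
    show "(\<lambda>k\<in>{..<n}. \<sigma> k (the_inv_into S (\<sigma> k) (s k))) k = s k"
      using s f_the_inv_into_f_bij_betw[OF \<sigma>] unfolding profiles_def
      by (auto simp: PiE_iff extensional_def)
  qed
  then show "u i s = relabel_utility n \<sigma> u (fst ((\<lambda>i. i), \<lambda>i. the_inv_into S (\<sigma> i)) i)
      (gb_apply n n ((\<lambda>i. i), \<lambda>i. the_inv_into S (\<sigma> i)) s)"
    by (simp add: relabel_utility_def gb_apply_player_id cong: restrict_cong)
qed

lemma gb_apply_equivariant_labelling:
  assumes G: "symmetry_group n A u G" and h: "h \<in> G"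
    and equiv: "\<And>i x. i < n \<Longrightarrow> x \<in> S \<Longrightarrow> snd h i (\<sigma> i x) = \<sigma> (fst h i) x"
    and t: "\<And>k. k < n \<Longrightarrow> t k \<in> S"
  shows "gb_apply n n h (\<lambda>k\<in>{..<n}. \<sigma> k (t (fst h k))) = (\<lambda>j\<in>{..<n}. \<sigma> j (t j))"
proof
  have hbij: "bij_betw (fst h) {..<n} {..<n}" using symmetry_group_player_bij[OF G h] .
  fix j
  show "gb_apply n n h (\<lambda>k\<in>{..<n}. \<sigma> k (t (fst h k))) j = (\<lambda>j\<in>{..<n}. \<sigma> j (t j)) j"
  proof (cases "j < n")
    case True
    define k where "k = the_inv_into {..<n} (fst h) j"
    have k: "k < n" "fst h k = j"
      using True bij_betwE[OF bij_betw_the_inv_into[OF hbij]] f_the_inv_into_f_bij_betw[OF hbij]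
      by (auto simp: k_def)
    then show ?thesis
      using True gb_apply_player[OF hbij k(1)] equiv[OF k(1) t] by simp
  qed (simp add: gb_apply_def)
qed

lemma vnm_symmetric_relabel:
  assumes "game n A u" and G: "symmetry_group n A u G" and trans: "player_n_transitive n G"
    and \<sigma>: "\<And>i. i < n \<Longrightarrow> bij_betw (\<sigma> i) (A 0) (A i)"
    and equiv: "\<And>h i x. h \<in> G \<Longrightarrow> i < n \<Longrightarrow> x \<in> A 0 \<Longrightarrow> snd h i (\<sigma> i x) = \<sigma> (fst h i) x"
  shows "vnm_symmetric n (\<lambda>_. A 0) (relabel_utility n \<sigma> u)"
  unfolding vnm_symmetric_def
proof (intro conjI allI impI ballI)
  have "2 \<le> n" and "\<forall>i<n. finite (A i) \<and> A i \<noteq> {}"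
    using assms(1) unfolding game_def by blast+
  then show "game n (\<lambda>_. A 0) (relabel_utility n \<sigma> u)"
    unfolding game_def by simp
  show "A 0 = A 0" ..
  fix p i t assume p: "bij_betw p {..<n} {..<n}" and i: "i < n" and t: "t \<in> profiles n (\<lambda>_. A 0)"
  obtain h where h: "h \<in> G" "\<And>k. k < n \<Longrightarrow> fst h k = p k"
    using trans p unfolding player_n_transitive_def by blast
  have tA: "\<And>k. k < n \<Longrightarrow> t k \<in> A 0" using t unfolding profiles_def by auto
  define s where "s = (\<lambda>k\<in>{..<n}. \<sigma> k (t (fst h k)))"
  have s: "s \<in> profiles n A"
    unfolding profiles_def s_def using bij_betwE[OF \<sigma>] tA p h(2) by (auto dest: bij_betwE)
  have "relabel_utility n \<sigma> u i (\<lambda>j\<in>{..<n}. t (p j)) = u i s"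
    unfolding relabel_utility_def s_def using h(2) by (intro arg_cong[where f = "u i"] restrict_ext) simp
  also have "\<dots> = u (p i) (gb_apply n n h s)"
    using symmetry_group_utility[OF G h(1) i s] h(2)[OF i] by simp
  also have "gb_apply n n h s = (\<lambda>j\<in>{..<n}. \<sigma> j (t j))"
    unfolding s_def
    by (rule gb_apply_equivariant_labelling[OF G h(1), where S = "A 0"]) (simp_all add: equiv h(1) tA)
  then have "u (p i) (gb_apply n n h s) = relabel_utility n \<sigma> u (p i) t"
    by (simp add: relabel_utility_def)
  finally show "relabel_utility n \<sigma> u (p i) t = relabel_utility n \<sigma> u i (\<lambda>j\<in>{..<n}. t (p j))"
    by simp
qed

theorem mainTheorem16:
  fixes n :: nat and A :: "nat \<Rightarrow> 's set" and u :: "nat \<Rightarrow> (nat \<Rightarrow> 's) \<Rightarrow> real"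
    and G :: "('s,'s) gbij set"
  assumes "game n A u"
    and "symmetry_group n A u G"
    and "player_n_transitive n G"
    and "strategy_trivial n A G"
  shows "\<exists>(B :: nat \<Rightarrow> 's set) v g. vnm_symmetric n B v \<and> strict_iso n A u n B v g"
proof -
  have "0 < n" using assms(1) unfolding game_def by simp
  then obtain \<sigma> where \<sigma>: "\<And>i. i < n \<Longrightarrow> bij_betw (\<sigma> i) (A 0) (A i)"
    and equiv: "\<And>h i x. h \<in> G \<Longrightarrow> i < n \<Longrightarrow> x \<in> A 0 \<Longrightarrow> snd h i (\<sigma> i x) = \<sigma> (fst h i) x"
    using equivariant_labelling_exists[OF assms(2-4)] by blast
  have "vnm_symmetric n (\<lambda>_. A 0) (relabel_utility n \<sigma> u)"
    using assms(1-3) \<sigma> equiv by (rule vnm_symmetric_relabel)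
  moreover have "strict_iso n A u n (\<lambda>_. A 0) (relabel_utility n \<sigma> u)
      ((\<lambda>i. i), \<lambda>i. the_inv_into (A 0) (\<sigma> i))"
    using \<sigma> by (rule strict_iso_relabel)
  ultimately show ?thesis by blast
qed

end
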